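(* Let $(M,g)$ be a pseudo-Riemannian manifold of dimension $n\ge3$ and $\nabla$ a torsion free, Ricci symmetric connection on $M$ with curvature tensor $R$. Then $(M,g,\nabla)$ is equiaffine Einstein if and only if $\pi_2(R)=0=\pi_3(R)$ at every point.
   Context: The curvature operator is $\mathcal{R}(u,v)=\nabla_u\nabla_v-\nabla_v\nabla_u-\nabla_{[u,v]}$ and $R(x,y,z,w):=g(\mathcal{R}(x,y)z,w)$. $Ric(x,y):=\mathrm{Tr}(z\mapsto\mathcal{R}(z,x)y)=g^{ij}R(e_i,x,y,e_j)$; $\nabla$ is Ricci symmetric if $Ric$ is symmetric; $\tau:=g^{il}g^{jk}R_{ijkl}$ (the $g$-trace of $Ric$). $(M,g,\nabla)$ is equiaffine Einstein if $Ric=\lambda g$ for some smooth function $\lambda$. For bilinear forms $h,k$: $Sh(x,y)=\tfrac12[h(x,y)+h(y,x)]$, $\Lambda h(x,y)=\tfrac12[h(x,y)-h(y,x)]$, $(h\cdot k)(x,y,z,w)=h(x,y)k(z,w)$, $(h\wedge k)(x,y,z,w)=h(x,z)k(y,w)-h(y,z)k(x,w)$. Pointwise, $\pi_2(R):=\tfrac1{n-1}\big[\tfrac{\tau}{n}g-S\,Ric\big]\wedge g$ and $\pi_3(R):=-\tfrac1{n+1}\big[2\Lambda Ric\cdot g+\Lambda Ric\wedge g\big]$. *)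

theory Defs
  imports "HOL-Analysis.Analysis"
begin

text \<open>At a point, the tangent space is identified with
  real^'n via a basis e_i; (0,4)-tensors are given by their components
  T i j k l = T(e_i,e_j,e_k,e_l); bilinear forms by components h i j.\<close>

type_synonym 'n bform = "'n \<Rightarrow> 'n \<Rightarrow> real"
type_synonym 'n tensor4 = "'n \<Rightarrow> 'n \<Rightarrow> 'n \<Rightarrow> 'n \<Rightarrow> real"

definition pseudo_metric :: "real^'n^'n \<Rightarrow> bool" where
  "pseudo_metric g \<longleftrightarrow> transpose g = g \<and> invertible g"

definition ginv :: "real^'n^'n \<Rightarrow> 'n::finite bform" where
  "ginv g i j = matrix_inv g $ i $ j"

definition gform :: "real^'n^'n \<Rightarrow> 'n bform" where
  "gform g i j = g $ i $ j"

text \<open>Algebraic identities satisfied by R(x,y,z,w) = g(R(x,y)z,w) for the curvature of a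
  torsion free connection: skew symmetry in (x,y) and the first Bianchi identity.\<close>
definition torsion_free_curvature :: "'n tensor4 \<Rightarrow> bool" where
  "torsion_free_curvature R \<longleftrightarrow>
     (\<forall>x y z w. R x y z w = - R y x z w) \<and>
     (\<forall>x y z w. R x y z w + R y z x w + R z x y w = 0)"

definition ricci :: "real^'n^'n \<Rightarrow> 'n::finite tensor4 \<Rightarrow> 'n bform" where
  "ricci g R x y = (\<Sum>i\<in>UNIV. \<Sum>j\<in>UNIV. ginv g i j * R i x y j)"

definition ricci_symmetric :: "real^'n^'n \<Rightarrow> 'n::finite tensor4 \<Rightarrow> bool" where
  "ricci_symmetric g R \<longleftrightarrow> (\<forall>x y. ricci g R x y = ricci g R y x)"

definition scal :: "real^'n^'n \<Rightarrow> 'n::finite tensor4 \<Rightarrow> real" where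
  "scal g R = (\<Sum>i\<in>UNIV. \<Sum>j\<in>UNIV. \<Sum>k\<in>UNIV. \<Sum>l\<in>UNIV.
                 ginv g i l * ginv g j k * R i j k l)"

definition symp :: "'n bform \<Rightarrow> 'n bform" where
  "symp h x y = (h x y + h y x) / 2"

definition altp :: "'n bform \<Rightarrow> 'n bform" where
  "altp h x y = (h x y - h y x) / 2"

definition dotp :: "'n bform \<Rightarrow> 'n bform \<Rightarrow> 'n tensor4" where
  "dotp h k x y z w = h x y * k z w"

definition wedgep :: "'n bform \<Rightarrow> 'n bform \<Rightarrow> 'n tensor4" where
  "wedgep h k x y z w = h x z * k y w - h y z * k x w"

definition pi2 :: "real^'n^'n \<Rightarrow> 'n::finite tensor4 \<Rightarrow> 'n tensor4" where
  "pi2 g R = (\<lambda>x y z w. (1 / (real CARD('n) - 1)) *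
      wedgep (\<lambda>a b. scal g R / real CARD('n) * gform g a b - symp (ricci g R) a b)
             (gform g) x y z w)"

definition pi3 :: "real^'n^'n \<Rightarrow> 'n::finite tensor4 \<Rightarrow> 'n tensor4" where
  "pi3 g R = (\<lambda>x y z w. - (1 / (real CARD('n) + 1)) *
      (2 * dotp (altp (ricci g R)) (gform g) x y z w
         + wedgep (altp (ricci g R)) (gform g) x y z w))"

definition equiaffine_einstein ::
    "'p set \<Rightarrow> ('p \<Rightarrow> real^'n^'n) \<Rightarrow> ('p \<Rightarrow> 'n::finite tensor4) \<Rightarrow> bool" where
  "equiaffine_einstein M g R \<longleftrightarrow>
     (\<exists>lam::'p \<Rightarrow> real. \<forall>p\<in>M. \<forall>x y. ricci (g p) (R p) x y = lam p * gform (g p) x y)"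

end

theory Submission
  imports Defs
begin

text \<open>Ricci symmetry makes \<open>\<Lambda> Ric\<close> vanish, so \<open>\<pi>\<^sub>3(R) = 0\<close> always holds. The wedge
  \<open>h \<wedge> g\<close> with the metric determines \<open>h\<close>: contracting \<open>h \<wedge> g\<close> with \<open>g\<^sup>-\<^sup>1\<close> in its second and
  fourth slots gives \<open>(n - 1) h\<close>. Hence for \<open>n \<ge> 2\<close> the condition \<open>\<pi>\<^sub>2(R) = 0\<close> says exactly
  \<open>Ric = (\<tau>/n) g\<close>, while conversely \<open>Ric = \<lambda> g\<close> forces \<open>\<lambda> = \<tau>/n\<close> on taking the trace.\<close>

lemma matrix_inv_right_left:
  fixes G :: "real^'n::finite^'n"
  assumes "invertible G"
  shows "G ** matrix_inv G = mat 1" "matrix_inv G ** G = mat 1"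
  using someI_ex[OF assms[unfolded invertible_def]] unfolding matrix_inv_def by auto

lemma gform_ginv_contract:
  fixes G :: "real^'n::finite^'n"
  assumes "invertible G"
  shows "(\<Sum>k\<in>UNIV. gform G i k * ginv G k j) = (if i = j then 1 else 0)"
proof -
  have "(G ** matrix_inv G) $ i $ j = (if i = j then 1 else 0)"
    using matrix_inv_right_left(1)[OF assms] by (simp add: mat_def)
  thus ?thesis by (simp add: matrix_matrix_mult_def ginv_def gform_def)
qed

lemma ginv_gform_contract:
  fixes G :: "real^'n::finite^'n"
  assumes "invertible G"
  shows "(\<Sum>k\<in>UNIV. ginv G i k * gform G k j) = (if i = j then 1 else 0)"
proof -
  have "(matrix_inv G ** G) $ i $ j = (if i = j then 1 else 0)"
    using matrix_inv_right_left(2)[OF assms] by (simp add: mat_def)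
  thus ?thesis by (simp add: matrix_matrix_mult_def ginv_def gform_def)
qed

lemma gform_sym:
  assumes "pseudo_metric G"
  shows "gform G x y = gform G y x"
  using assms unfolding pseudo_metric_def gform_def by (metis transpose_def vec_lambda_beta)

lemma trace_ginv_gform:
  fixes G :: "real^'n::finite^'n"
  assumes "pseudo_metric G"
  shows "(\<Sum>j\<in>UNIV. \<Sum>k\<in>UNIV. ginv G j k * gform G j k) = real CARD('n)"
proof -
  have "(\<Sum>k\<in>UNIV. ginv G j k * gform G j k) = 1" for j
    using ginv_gform_contract[of G j j] assms gform_sym[OF assms]
    by (simp add: pseudo_metric_def)
  thus ?thesis by simp
qed

lemma scal_eq_trace_ricci: "scal G R = (\<Sum>j\<in>UNIV. \<Sum>k\<in>UNIV. ginv G j k * ricci G R j k)"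
proof -
  have "(\<Sum>j\<in>UNIV. \<Sum>k\<in>UNIV. ginv G j k * ricci G R j k)
     = (\<Sum>j\<in>UNIV. \<Sum>k\<in>UNIV. \<Sum>i\<in>UNIV. \<Sum>l\<in>UNIV. ginv G i l * ginv G j k * R i j k l)"
    unfolding ricci_def sum_distrib_left by (simp add: mult_ac)
  also have "\<dots> = (\<Sum>j\<in>UNIV. \<Sum>i\<in>UNIV. \<Sum>k\<in>UNIV. \<Sum>l\<in>UNIV. ginv G i l * ginv G j k * R i j k l)"
    by (rule sum.cong[OF refl], rule sum.swap)
  also have "\<dots> = scal G R" unfolding scal_def by (rule sum.swap)
  finally show ?thesis ..
qed

lemma einstein_factor_eq_scal:
  fixes G :: "real^'n::finite^'n"
  assumes "pseudo_metric G" and "\<forall>x y. ricci G R x y = lam * gform G x y"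
  shows "lam = scal G R / real CARD('n)"
proof -
  have "scal G R = lam * real CARD('n)"
    using trace_ginv_gform[OF assms(1)] assms(2)
    by (simp add: scal_eq_trace_ricci sum_distrib_left[symmetric] mult_ac)
  thus ?thesis by simp
qed

lemma equiaffine_einstein_iff_ricci_eq_scal:
  fixes g :: "'p \<Rightarrow> real^'n::finite^'n"
  assumes "\<forall>p\<in>M. pseudo_metric (g p)"
  shows "equiaffine_einstein M g R \<longleftrightarrow>
    (\<forall>p\<in>M. \<forall>x y. ricci (g p) (R p) x y = scal (g p) (R p) / real CARD('n) * gform (g p) x y)"
proof
  assume "equiaffine_einstein M g R"
  then obtain lam where "\<forall>p\<in>M. \<forall>x y. ricci (g p) (R p) x y = lam p * gform (g p) x y"
    unfolding equiaffine_einstein_def by blast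
  thus "\<forall>p\<in>M. \<forall>x y. ricci (g p) (R p) x y = scal (g p) (R p) / real CARD('n) * gform (g p) x y"
    using assms einstein_factor_eq_scal by metis
qed (auto simp: equiaffine_einstein_def intro: exI[of _ "\<lambda>p. scal (g p) (R p) / real CARD('n)"])

lemma contract_wedgep_gform:
  fixes G :: "real^'n::finite^'n"
  assumes "pseudo_metric G"
  shows "(\<Sum>y\<in>UNIV. \<Sum>w\<in>UNIV. wedgep h (gform G) x y z w * ginv G w y)
         = (real CARD('n) - 1) * h x z"
proof -
  have inv: "invertible G" using assms by (simp add: pseudo_metric_def)
  have trace: "(\<Sum>y\<in>UNIV. \<Sum>w\<in>UNIV. gform G y w * ginv G w y) = real CARD('n)"
    using gform_ginv_contract[OF inv] by simp
  have delta: "(\<Sum>y\<in>UNIV. h y z * (\<Sum>w\<in>UNIV. gform G x w * ginv G w y)) = h x z"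
    by (simp add: gform_ginv_contract[OF inv] if_distrib[of "\<lambda>t. h _ z * t"] cong: if_cong)
  have "(\<Sum>y\<in>UNIV. \<Sum>w\<in>UNIV. wedgep h (gform G) x y z w * ginv G w y)
      = h x z * (\<Sum>y\<in>UNIV. \<Sum>w\<in>UNIV. gform G y w * ginv G w y)
        - (\<Sum>y\<in>UNIV. h y z * (\<Sum>w\<in>UNIV. gform G x w * ginv G w y))"
    unfolding wedgep_def sum_subtractf[symmetric] sum_distrib_left
    by (simp add: algebra_simps)
  also have "\<dots> = (real CARD('n) - 1) * h x z"
    unfolding trace delta by (simp add: algebra_simps)
  finally show ?thesis .
qed

lemma wedgep_gform_eq_zero_iff:
  fixes G :: "real^'n::finite^'n"
  assumes "pseudo_metric G" and "CARD('n) \<ge> 2"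
  shows "wedgep h (gform G) = (\<lambda>x y z w. 0) \<longleftrightarrow> h = (\<lambda>x y. 0)"
proof
  assume "wedgep h (gform G) = (\<lambda>x y z w. 0)"
  hence "(real CARD('n) - 1) * h x z = 0" for x z
    using contract_wedgep_gform[OF assms(1), of h x z] by simp
  thus "h = (\<lambda>x y. 0)" using assms(2) by (simp add: fun_eq_iff)
qed (simp add: fun_eq_iff wedgep_def)

lemma pi2_eq_zero_iff:
  fixes G :: "real^'n::finite^'n"
  assumes "pseudo_metric G" and "CARD('n) \<ge> 2"
  shows "pi2 G R = (\<lambda>x y z w. 0) \<longleftrightarrow>
         (\<forall>x y. symp (ricci G R) x y = scal G R / real CARD('n) * gform G x y)"
proof -
  define h where "h = (\<lambda>a b. scal G R / real CARD('n) * gform G a b - symp (ricci G R) a b)"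
  have "pi2 G R = (\<lambda>x y z w. 0) \<longleftrightarrow> wedgep h (gform G) = (\<lambda>x y z w. 0)"
    using assms(2) by (simp add: pi2_def h_def fun_eq_iff)
  also have "\<dots> \<longleftrightarrow> h = (\<lambda>x y. 0)"
    by (rule wedgep_gform_eq_zero_iff[OF assms])
  finally show ?thesis by (auto simp: h_def fun_eq_iff)
qed

lemma pi3_eq_zero_if_ricci_symmetric:
  assumes "ricci_symmetric G R"
  shows "pi3 G R = (\<lambda>x y z w. 0)"
proof -
  have "altp (ricci G R) = (\<lambda>x y. 0)"
    using assms by (simp add: ricci_symmetric_def altp_def fun_eq_iff)
  thus ?thesis by (simp add: pi3_def dotp_def wedgep_def)
qed

lemma ricci_eq_scal_iff_pi2_eq_zero:
  fixes G :: "real^'n::finite^'n"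
  assumes "pseudo_metric G" and "CARD('n) \<ge> 2" and "ricci_symmetric G R"
  shows "(\<forall>x y. ricci G R x y = scal G R / real CARD('n) * gform G x y) \<longleftrightarrow>
         pi2 G R = (\<lambda>x y z w. 0)"
proof -
  have "symp (ricci G R) = ricci G R"
    using assms(3) by (simp add: ricci_symmetric_def symp_def fun_eq_iff)
  thus ?thesis using pi2_eq_zero_iff[OF assms(1,2)] by simp
qed

theorem lemma8p2:
  fixes M :: "'p set"
    and g :: "'p \<Rightarrow> real^'n::finite^'n"
    and R :: "'p \<Rightarrow> 'n tensor4"
  assumes dim: "CARD('n) \<ge> 3"
    and metric: "\<forall>p\<in>M. pseudo_metric (g p)"
    and torsion_free: "\<forall>p\<in>M. torsion_free_curvature (R p)"
    and ric_sym: "\<forall>p\<in>M. ricci_symmetric (g p) (R p)"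
  shows "equiaffine_einstein M g R \<longleftrightarrow>
         (\<forall>p\<in>M. pi2 (g p) (R p) = (\<lambda>x y z w. 0) \<and> pi3 (g p) (R p) = (\<lambda>x y z w. 0))"
proof -
  have dim2: "CARD('n) \<ge> 2" using dim by simp
  have "equiaffine_einstein M g R \<longleftrightarrow>
        (\<forall>p\<in>M. \<forall>x y. ricci (g p) (R p) x y = scal (g p) (R p) / real CARD('n) * gform (g p) x y)"
    by (rule equiaffine_einstein_iff_ricci_eq_scal[OF metric])
  also have "\<dots> \<longleftrightarrow> (\<forall>p\<in>M. pi2 (g p) (R p) = (\<lambda>x y z w. 0))"
    using metric ric_sym ricci_eq_scal_iff_pi2_eq_zero[OF _ dim2] by blast
  finally show ?thesis
    using ric_sym pi3_eq_zero_if_ricci_symmetric by blast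
qed

end
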